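(* Let $A$ be a meet-complemented lattice in which $\Box x$ exists for every $x\in A$, and let $a,b\in A$. Then (i) $\Box(a\wedge b)\le\Box a\wedge\Box b$; (ii) $\Box a\vee\Box b\le\Box(a\vee b)$; (iii) $\Box(a\vee\neg b)\wedge b\le\Box a$; (iv) $\Box(a\vee b)\wedge\neg b\le\Box a$; (v) $\Box a\wedge\Box\neg a=0$; (vi) $\Box 0=0$; (vii) $\Box a=1$ iff $a=1$.
   Context: A meet-complemented lattice is a lattice $(L,\le)$ (not necessarily distributive) such that for every $a\in L$ the element $\neg a=\max\{b\in L: a\wedge b\le c\ \text{for all } c\in L\}$ exists; it is bounded with bottom $0$ and top $1$. For $a\in L$, $\Box a=\max\{b\in L: a\vee\neg b=1\}$. *)

theory Defs
  imports Main
begin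

definition is_max :: "'a::order set \<Rightarrow> 'a \<Rightarrow> bool" where
  "is_max S m \<longleftrightarrow> m \<in> S \<and> (\<forall>x\<in>S. x \<le> m)"

definition neg_set :: "'a::bounded_lattice \<Rightarrow> 'a set" where
  "neg_set a = {b. \<forall>c. inf a b \<le> c}"

definition mc_neg :: "'a::bounded_lattice \<Rightarrow> 'a" where
  "mc_neg a = (THE m. is_max (neg_set a) m)"

definition meet_complemented :: "'a::bounded_lattice itself \<Rightarrow> bool" where
  "meet_complemented _ \<longleftrightarrow> (\<forall>a::'a. \<exists>m. is_max (neg_set a) m)"

definition box_set :: "'a::bounded_lattice \<Rightarrow> 'a set" where
  "box_set a = {b. sup a (mc_neg b) = top}"

definition mc_box :: "'a::bounded_lattice \<Rightarrow> 'a" where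
  "mc_box a = (THE m. is_max (box_set a) m)"

end

theory Submission
  imports Defs
begin

text \<open>Everything follows from two Galois-type characterisations:
  \<open>x \<le> \<not>a \<longleftrightarrow> a \<sqinter> x = 0\<close> and \<open>x \<le> \<Box>a \<longleftrightarrow> a \<squnion> \<not>x = 1\<close>.
  Since \<open>\<not>\<close> is antitone, \<open>a \<squnion> \<not>c = 1\<close> holds as soon as \<open>c \<le> \<Box>y\<close> and \<open>y \<le> a \<squnion> \<not>c\<close>
  (because then \<open>1 = y \<squnion> \<not>\<Box>y \<le> a \<squnion> \<not>c\<close>); this single criterion gives (i)--(iv).
  Item (v) uses the De Morgan law \<open>\<not>(x \<squnion> y) = \<not>x \<sqinter> \<not>y\<close>, valid in any
  meet-complemented lattice.\<close>

lemma the_is_max: "is_max S (m::'a::order) \<Longrightarrow> (THE m. is_max S m) = m"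
  by (rule the_equality) (auto simp: is_max_def intro: antisym)

context
  assumes meet_compl: "meet_complemented TYPE('a::bounded_lattice)"
begin

lemma le_mc_neg_iff: "(x::'a) \<le> mc_neg a \<longleftrightarrow> inf a x = bot"
proof -
  obtain m where m: "is_max (neg_set a) m"
    using meet_compl unfolding meet_complemented_def by blast
  have neg_eq: "mc_neg a = m"
    unfolding mc_neg_def using the_is_max[OF m] .
  have neg_set_iff: "b \<in> neg_set a \<longleftrightarrow> inf a b = bot" for b
    unfolding neg_set_def by (auto intro: bot_unique[THEN iffD1])
  have "inf a m = bot" and "inf a x = bot \<Longrightarrow> x \<le> m"
    using m neg_set_iff unfolding is_max_def by blast+
  then show ?thesis
    unfolding neg_eq by (metis bot_unique inf_mono order_refl)
qed

lemma inf_mc_neg: "inf (a::'a) (mc_neg a) = bot"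
  using le_mc_neg_iff by blast

lemma mc_neg_antimono: "(c::'a) \<le> d \<Longrightarrow> mc_neg d \<le> mc_neg c"
  using inf_mc_neg[of d] le_mc_neg_iff by (metis bot_unique inf_mono order_refl)

lemma le_mc_neg_mc_neg: "(c::'a) \<le> mc_neg (mc_neg c)"
  using le_mc_neg_iff by (metis inf_commute order_refl)

lemma mc_neg_top: "mc_neg (top::'a) = bot"
  using inf_mc_neg[of top] by simp

lemma mc_neg_sup: "mc_neg (sup x y :: 'a) = inf (mc_neg x) (mc_neg y)"
proof (rule antisym)
  show "mc_neg (sup x y) \<le> inf (mc_neg x) (mc_neg y)"
    by (simp add: mc_neg_antimono)
  have "x \<le> mc_neg (inf (mc_neg x) (mc_neg y))" "y \<le> mc_neg (inf (mc_neg x) (mc_neg y))"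
    using mc_neg_antimono le_mc_neg_mc_neg by (meson inf_le1 inf_le2 order_trans)+
  then have "sup x y \<le> mc_neg (inf (mc_neg x) (mc_neg y))"
    by simp
  then show "inf (mc_neg x) (mc_neg y) \<le> mc_neg (sup x y)"
    unfolding le_mc_neg_iff by (simp only: inf_commute)
qed

context
  assumes box_exists: "\<forall>x::'a. \<exists>m. is_max (box_set x) m"
begin

lemma le_mc_box_iff: "(x::'a) \<le> mc_box a \<longleftrightarrow> sup a (mc_neg x) = top"
proof -
  obtain m where m: "is_max (box_set a) m"
    using box_exists by blast
  have box_eq: "mc_box a = m"
    unfolding mc_box_def using the_is_max[OF m] .
  have "sup a (mc_neg m) = top" and "sup a (mc_neg x) = top \<Longrightarrow> x \<le> m"
    using m unfolding is_max_def box_set_def by blast+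
  moreover have "sup a (mc_neg x) = top" if "sup a (mc_neg m) = top" "x \<le> m"
    using mc_neg_antimono[OF that(2)] that(1) by (metis sup_mono order_refl top_unique)
  ultimately show ?thesis
    unfolding box_eq by blast
qed

lemma sup_mc_neg_mc_box: "sup (a::'a) (mc_neg (mc_box a)) = top"
  using le_mc_box_iff by blast

lemma le_mc_boxI:
  assumes "(c::'a) \<le> mc_box y" and "y \<le> sup a (mc_neg c)"
  shows "c \<le> mc_box a"
proof -
  have "sup y (mc_neg (mc_box y)) \<le> sup a (mc_neg c)"
    using assms mc_neg_antimono by (simp add: le_supI2)
  then show ?thesis
    unfolding le_mc_box_iff sup_mc_neg_mc_box by (simp add: top_unique)
qed

lemma mc_box_mono: "(x::'a) \<le> y \<Longrightarrow> mc_box x \<le> mc_box y"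
  by (rule le_mc_boxI[OF order_refl]) (simp add: le_supI1)

lemma inf_mc_box_sup_mc_neg_le: "inf (mc_box (sup a (mc_neg b))) (b::'a) \<le> mc_box a"
  by (rule le_mc_boxI[OF inf_le1]) (simp add: le_supI2 mc_neg_antimono)

lemma inf_mc_box_sup_le: "inf (mc_box (sup a b)) (mc_neg (b::'a)) \<le> mc_box a"
proof (rule le_mc_boxI[OF inf_le1])
  have "b \<le> mc_neg (inf (mc_box (sup a b)) (mc_neg b))"
    using le_mc_neg_mc_neg mc_neg_antimono by (meson inf_le2 order_trans)
  then show "sup a b \<le> sup a (mc_neg (inf (mc_box (sup a b)) (mc_neg b)))"
    by (simp add: le_supI2)
qed

lemma inf_mc_box_mc_box_mc_neg: "inf (mc_box a) (mc_box (mc_neg (a::'a))) = bot"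
proof -
  define c where "c = inf (mc_box a) (mc_box (mc_neg a))"
  have "sup a (mc_neg c) = top" "sup (mc_neg a) (mc_neg c) = top"
    using le_mc_box_iff[of c a] le_mc_box_iff[of c "mc_neg a"] unfolding c_def by simp_all
  then have "inf (mc_neg a) (mc_neg (mc_neg c)) = bot"
    and disj: "inf (mc_neg (mc_neg a)) (mc_neg (mc_neg c)) = bot"
    using mc_neg_sup mc_neg_top by metis+
  then have "mc_neg (mc_neg c) \<le> mc_neg (mc_neg a)"
    using le_mc_neg_iff by blast
  with disj have "mc_neg (mc_neg c) = bot"
    by (simp add: inf_absorb2)
  then show ?thesis
    using le_mc_neg_mc_neg[of c] unfolding c_def by (simp add: bot_unique)
qed

lemma mc_box_bot: "mc_box (bot::'a) = bot"
  using sup_mc_neg_mc_box[of bot] le_mc_neg_mc_neg[of "mc_box bot"] mc_neg_top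
  by (simp add: bot_unique)

lemma mc_box_eq_top_iff: "mc_box (a::'a) = top \<longleftrightarrow> a = top"
  using sup_mc_neg_mc_box[of a] mc_neg_top le_mc_box_iff[of top a]
  by (auto simp: top_unique)

end

end

theorem proposition2:
  fixes a b :: "'a::bounded_lattice"
  assumes "meet_complemented TYPE('a)"
    and "\<forall>x::'a. \<exists>m. is_max (box_set x) m"
  shows "mc_box (inf a b) \<le> inf (mc_box a) (mc_box b)
     \<and> sup (mc_box a) (mc_box b) \<le> mc_box (sup a b)
     \<and> inf (mc_box (sup a (mc_neg b))) b \<le> mc_box a
     \<and> inf (mc_box (sup a b)) (mc_neg b) \<le> mc_box a
     \<and> inf (mc_box a) (mc_box (mc_neg a)) = bot
     \<and> mc_box (bot::'a) = bot
     \<and> (mc_box a = top \<longleftrightarrow> a = top)"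
  using mc_box_mono[OF assms] inf_mc_box_sup_mc_neg_le[OF assms]
    inf_mc_box_sup_le[OF assms] inf_mc_box_mc_box_mc_neg[OF assms]
    mc_box_bot[OF assms] mc_box_eq_top_iff[OF assms]
  by simp

end
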